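(* Let $G$ be a (claw, bull)-free graph with $\alpha(G)\ge 3$ and $\mathrm{diam}(G)=2$. Then $\ell(G)\ge 6$.
   Context: A claw is a graph isomorphic to $K_{1,3}$; a bull is the graph obtained from a triangle by adding two pendant edges at two different vertices. A graph is (claw, bull)-free if it has no induced claw and no induced bull. $\alpha(G)$ is the independence number of $G$, $\mathrm{diam}(G)$ its diameter, and $\ell(G)$ the length of a longest induced cycle in $G$. *)

theory Defs
  imports Main "HOL-Library.Extended_Nat"
begin

definition graph :: "'a set \<Rightarrow> ('a \<Rightarrow> 'a \<Rightarrow> bool) \<Rightarrow> bool" where
  "graph V E \<longleftrightarrow> finite V \<and> (\<forall>u v. E u v \<longrightarrow> u \<in> V \<and> v \<in> V)
     \<and> (\<forall>u v. E u v \<longrightarrow> E v u) \<and> (\<forall>u. \<not> E u u)"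

definition claw_free :: "'a set \<Rightarrow> ('a \<Rightarrow> 'a \<Rightarrow> bool) \<Rightarrow> bool" where
  "claw_free V E \<longleftrightarrow> \<not> (\<exists>a\<in>V. \<exists>b\<in>V. \<exists>c\<in>V. \<exists>d\<in>V.
      distinct [a, b, c, d] \<and> E a b \<and> E a c \<and> E a d
      \<and> \<not> E b c \<and> \<not> E b d \<and> \<not> E c d)"

definition bull_free :: "'a set \<Rightarrow> ('a \<Rightarrow> 'a \<Rightarrow> bool) \<Rightarrow> bool" where
  "bull_free V E \<longleftrightarrow> \<not> (\<exists>a\<in>V. \<exists>b\<in>V. \<exists>c\<in>V. \<exists>d\<in>V. \<exists>e\<in>V.
      distinct [a, b, c, d, e] \<and> E a b \<and> E b c \<and> E a c \<and> E a d \<and> E b e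
      \<and> \<not> E a e \<and> \<not> E b d \<and> \<not> E c d \<and> \<not> E c e \<and> \<not> E d e)"

definition independent :: "'a set \<Rightarrow> ('a \<Rightarrow> 'a \<Rightarrow> bool) \<Rightarrow> 'a set \<Rightarrow> bool" where
  "independent V E S \<longleftrightarrow> S \<subseteq> V \<and> (\<forall>u\<in>S. \<forall>v\<in>S. \<not> E u v)"

definition alpha :: "'a set \<Rightarrow> ('a \<Rightarrow> 'a \<Rightarrow> bool) \<Rightarrow> nat" where
  "alpha V E = Max {card S | S. independent V E S}"

definition walk :: "'a set \<Rightarrow> ('a \<Rightarrow> 'a \<Rightarrow> bool) \<Rightarrow> 'a list \<Rightarrow> bool" where
  "walk V E xs \<longleftrightarrow> xs \<noteq> [] \<and> set xs \<subseteq> V \<and> (\<forall>i. Suc i < length xs \<longrightarrow> E (xs ! i) (xs ! Suc i))"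

definition dist :: "'a set \<Rightarrow> ('a \<Rightarrow> 'a \<Rightarrow> bool) \<Rightarrow> 'a \<Rightarrow> 'a \<Rightarrow> enat" where
  "dist V E u v =
     (if \<exists>xs. walk V E xs \<and> hd xs = u \<and> last xs = v
      then enat (LEAST n. \<exists>xs. walk V E xs \<and> hd xs = u \<and> last xs = v \<and> length xs = Suc n)
      else \<infinity>)"

definition diam :: "'a set \<Rightarrow> ('a \<Rightarrow> 'a \<Rightarrow> bool) \<Rightarrow> enat" where
  "diam V E = (SUP p \<in> V \<times> V. dist V E (fst p) (snd p))"

definition induced_cycle :: "'a set \<Rightarrow> ('a \<Rightarrow> 'a \<Rightarrow> bool) \<Rightarrow> 'a list \<Rightarrow> bool" where
  "induced_cycle V E cs \<longleftrightarrow> length cs \<ge> 3 \<and> distinct cs \<and> set cs \<subseteq> V \<and>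
     (\<forall>i < length cs. \<forall>j < length cs.
        E (cs ! i) (cs ! j) \<longleftrightarrow> (j = Suc i mod length cs \<or> i = Suc j mod length cs))"

definition longest_induced_cycle :: "'a set \<Rightarrow> ('a \<Rightarrow> 'a \<Rightarrow> bool) \<Rightarrow> nat" where
  "longest_induced_cycle V E =
     (let L = {length cs | cs. induced_cycle V E cs} in if L = {} then 0 else Max L)"

end

theory Submission
  imports Defs
begin

(* Pick an independent set {a, b, c}. Since the diameter is 2, each pair of them has a common
   neighbour: x for a, b, then y for b, c and z for c, a. Claw-freeness forbids a vertex adjacent
   to all of a, b, c, so each of x, y, z is non-adjacent to the remaining vertex of the triple.
   If x and y were adjacent, the triangle x y b with pendants a at x and c at y would be an
   induced bull. Hence a x b y c z is an induced 6-cycle. *)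

lemma graph_adj_sym: "graph V E \<Longrightarrow> E u v \<longleftrightarrow> E v u"
  unfolding graph_def by blast

lemma induced_cycle_hexagonI:
  assumes g: "graph V E"
    and edges: "E v0 v1" "E v1 v2" "E v2 v3" "E v3 v4" "E v4 v5" "E v5 v0"
    and non_edges: "\<not> E v0 v2" "\<not> E v0 v3" "\<not> E v0 v4" "\<not> E v1 v3" "\<not> E v1 v4"
      "\<not> E v1 v5" "\<not> E v2 v4" "\<not> E v2 v5" "\<not> E v3 v5"
  shows "induced_cycle V E [v0, v1, v2, v3, v4, v5]"
proof -
  have sym: "\<And>u v. E u v \<longleftrightarrow> E v u" and irrefl: "\<And>u. \<not> E u u"
    and in_V: "\<And>u v. E u v \<Longrightarrow> u \<in> V"
    using g unfolding graph_def by blast+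
  \<comment> \<open>distinct vertices of a 6-cycle have different neighbourhoods\<close>
  have "distinct [v0, v1, v2, v3, v4, v5]"
    using edges non_edges irrefl sym by auto
  moreover have "set [v0, v1, v2, v3, v4, v5] \<subseteq> V"
    using edges in_V by auto
  moreover have "\<forall>i < length [v0, v1, v2, v3, v4, v5]. \<forall>j < length [v0, v1, v2, v3, v4, v5].
      E ([v0, v1, v2, v3, v4, v5] ! i) ([v0, v1, v2, v3, v4, v5] ! j) \<longleftrightarrow>
      (j = Suc i mod length [v0, v1, v2, v3, v4, v5] \<or> i = Suc j mod length [v0, v1, v2, v3, v4, v5])"
    using edges non_edges irrefl sym
    by (simp add: less_Suc_eq all_conj_distrib)
  ultimately show ?thesis
    unfolding induced_cycle_def by simp
qed

lemma dist_le_diam: "u \<in> V \<Longrightarrow> v \<in> V \<Longrightarrow> dist V E u v \<le> diam V E"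
  unfolding diam_def by (rule SUP_upper2[of "(u, v)"]) auto

lemma ex_walk_length_dist:
  assumes "dist V E u v = enat n"
  shows "\<exists>xs. walk V E xs \<and> hd xs = u \<and> last xs = v \<and> length xs = Suc n"
proof -
  obtain ys where ys: "walk V E ys" "hd ys = u" "last ys = v"
    using assms unfolding dist_def by (auto split: if_splits)
  then have "length ys = Suc (length ys - 1)"
    unfolding walk_def by simp
  with ys have "\<exists>m xs. walk V E xs \<and> hd xs = u \<and> last xs = v \<and> length xs = Suc m"
    by blast
  then have "\<exists>xs. walk V E xs \<and> hd xs = u \<and> last xs = v
      \<and> length xs = Suc (LEAST m. \<exists>xs. walk V E xs \<and> hd xs = u \<and> last xs = v \<and> length xs = Suc m)"
    by (rule LeastI_ex)
  moreover have "dist V E u v = enat (LEAST m. \<exists>xs. walk V E xs \<and> hd xs = u \<and> last xs = v \<and> length xs = Suc m)"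
    using ys unfolding dist_def by auto
  ultimately show ?thesis
    using assms by simp
qed

lemma dist_le_2_common_neighbour:
  assumes "dist V E u v \<le> 2" "u \<noteq> v" "\<not> E u v"
  shows "\<exists>x. E u x \<and> E x v"
proof -
  obtain n where n: "dist V E u v = enat n" "n \<le> 2"
    using assms(1) enat_ile by (fastforce simp: numeral_eq_enat)
  then obtain xs where xs: "walk V E xs" "hd xs = u" "last xs = v" "length xs = Suc n"
    using ex_walk_length_dist[OF n(1)] by blast
  then have ends: "xs ! 0 = u" "xs ! n = v"
    using hd_conv_nth[of xs] last_conv_nth[of xs] unfolding walk_def by auto
  have step: "\<And>i. i < n \<Longrightarrow> E (xs ! i) (xs ! Suc i)"
    using xs unfolding walk_def by simp
  consider "n = 0" | "n = 1" | "n = 2"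
    using n(2) by linarith
  then show ?thesis
  proof cases
    case 1
    then show ?thesis using ends assms(2) by simp
  next
    case 2
    then show ?thesis using ends step[of 0] assms(3) by simp
  next
    case 3
    then show ?thesis using ends step[of 0] step[of 1] by (auto simp: numeral_2_eq_2)
  qed
qed

lemma diam_le_2_common_neighbour:
  assumes "graph V E" "diam V E \<le> 2" "u \<in> V" "v \<in> V" "u \<noteq> v" "\<not> E u v"
  shows "\<exists>x. E x u \<and> E x v"
proof -
  have "dist V E u v \<le> 2"
    using dist_le_diam[OF assms(3,4)] assms(2) by (rule order_trans)
  then obtain x where "E u x" "E x v"
    using dist_le_2_common_neighbour assms(5,6) by metis
  then show ?thesis
    using graph_adj_sym[OF assms(1)] by blast
qed

lemma independent_subset: "independent V E S \<Longrightarrow> T \<subseteq> S \<Longrightarrow> independent V E T"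
  unfolding independent_def by blast

lemma ex_independent_card_eq:
  assumes "finite V" "k \<le> alpha V E"
  shows "\<exists>S. independent V E S \<and> card S = k"
proof -
  let ?cards = "{card S | S. independent V E S}"
  have "?cards \<subseteq> card ` Pow V"
    unfolding independent_def by auto
  then have "finite ?cards"
    using assms(1) finite_subset by blast
  moreover have "independent V E {}"
    unfolding independent_def by simp
  then have "?cards \<noteq> {}"
    by blast
  ultimately have "alpha V E \<in> ?cards"
    unfolding alpha_def by (rule Max_in)
  then obtain S where S: "independent V E S" "card S = alpha V E"
    by auto
  then obtain T where "T \<subseteq> S" "card T = k"
    using assms(2) obtain_subset_with_card_n by metis
  with S show ?thesis
    using independent_subset by blast
qed

lemma claw_freeD:
  assumes "claw_free V E" "{a, b, c, d} \<subseteq> V" "distinct [a, b, c, d]"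
    and "E a b" "E a c" "E a d" "\<not> E b c" "\<not> E b d" "\<not> E c d"
  shows False
  using assms unfolding claw_free_def by blast

lemma bull_freeD:
  assumes "bull_free V E" "{a, b, c, d, e} \<subseteq> V" "distinct [a, b, c, d, e]"
    and "E a b" "E b c" "E a c" "E a d" "E b e"
    and "\<not> E a e" "\<not> E b d" "\<not> E c d" "\<not> E c e" "\<not> E d e"
  shows False
  using assms unfolding bull_free_def by blast

lemma claw_free_nonadjacent_third:
  assumes "graph V E" "claw_free V E" "independent V E {a, b, c}" "distinct [a, b, c]"
    and "E x a" "E x b"
  shows "\<not> E x c"
proof
  assume "E x c"
  with assms(1,5,6) have "x \<in> V" "distinct [x, a, b, c]"
    using assms(4) unfolding graph_def by auto
  with assms \<open>E x c\<close> show False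
    using claw_freeD[of V E x a b c] unfolding independent_def by auto
qed

lemma bull_free_nonadjacent_common_neighbours:
  assumes "graph V E" "bull_free V E" "independent V E {a, b, c}" "distinct [a, b, c]"
    and "E x a" "E x b" "\<not> E x c" "E y b" "E y c" "\<not> E y a"
  shows "\<not> E x y"
proof
  assume "E x y"
  with assms(1,3-10) have "{x, y} \<subseteq> V" "distinct [x, y, b, a, c]"
    unfolding graph_def independent_def by auto
  with assms \<open>E x y\<close> show False
    using bull_freeD[of V E x y b a c] unfolding independent_def by auto
qed

lemma length_induced_cycle_le_longest:
  assumes "finite V" "induced_cycle V E cs"
  shows "length cs \<le> longest_induced_cycle V E"
proof -
  let ?lengths = "{length cs | cs. induced_cycle V E cs}"
  have "?lengths \<subseteq> {..card V}"
    unfolding induced_cycle_def using assms(1) by (auto simp: card_mono simp flip: distinct_card)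
  then have "finite ?lengths"
    by (rule finite_subset) simp
  moreover have "length cs \<in> ?lengths"
    using assms(2) by blast
  ultimately show ?thesis
    unfolding longest_induced_cycle_def Let_def by auto
qed

lemma claw_bull_free_induced_hexagon:
  assumes "graph V E" "claw_free V E" "bull_free V E"
    and indep: "independent V E {a, b, c}" "distinct [a, b, c]"
    and x: "E x a" "E x b" and y: "E y b" "E y c" and z: "E z c" "E z a"
  shows "induced_cycle V E [a, x, b, y, c, z]"
proof -
  have indep_rot: "independent V E {b, c, a}" "independent V E {c, a, b}"
    and distinct_rot: "distinct [b, c, a]" "distinct [c, a, b]"
    using indep by (auto simp: insert_commute)
  have claw: "\<not> E x c" "\<not> E y a" "\<not> E z b"
    using claw_free_nonadjacent_third[OF assms(1,2) indep x]
      claw_free_nonadjacent_third[OF assms(1,2) indep_rot(1) distinct_rot(1) y]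
      claw_free_nonadjacent_third[OF assms(1,2) indep_rot(2) distinct_rot(2) z] .
  have bull: "\<not> E x y" "\<not> E y z" "\<not> E z x"
    using bull_free_nonadjacent_common_neighbours[OF assms(1,3) indep x claw(1) y claw(2)]
      bull_free_nonadjacent_common_neighbours[OF assms(1,3) indep_rot(1) distinct_rot(1) y claw(2) z claw(3)]
      bull_free_nonadjacent_common_neighbours[OF assms(1,3) indep_rot(2) distinct_rot(2) z claw(3) x claw(1)] .
  show ?thesis
    using x y z claw bull indep(1) unfolding independent_def
    by (intro induced_cycle_hexagonI[OF assms(1)]) (simp_all add: graph_adj_sym[OF assms(1)])
qed

theorem lemma6:
  fixes V :: "'a set" and E :: "'a \<Rightarrow> 'a \<Rightarrow> bool"
  assumes "graph V E"
    and "claw_free V E"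
    and "bull_free V E"
    and "alpha V E \<ge> 3"
    and "diam V E = 2"
  shows "longest_induced_cycle V E \<ge> 6"
proof -
  have fin: "finite V"
    using assms(1) unfolding graph_def by simp
  obtain S where "independent V E S" "card S = 3"
    using ex_independent_card_eq[OF fin assms(4)] by blast
  then obtain a b c where indep: "independent V E {a, b, c}" "distinct [a, b, c]"
    by (auto simp: card_3_iff)
  have common_neighbour: "\<exists>x. E x u \<and> E x v" if "u \<in> {a, b, c}" "v \<in> {a, b, c}" "u \<noteq> v" for u v
    by (rule diam_le_2_common_neighbour[OF assms(1)])
      (use assms(5) indep that in \<open>auto simp: independent_def\<close>)
  then obtain x y z where "E x a" "E x b" "E y b" "E y c" "E z c" "E z a"
    using indep(2) by (metis distinct_length_2_or_more insertCI)
  then have "induced_cycle V E [a, x, b, y, c, z]"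
    using claw_bull_free_induced_hexagon[OF assms(1-3) indep] by blast
  then have "length [a, x, b, y, c, z] \<le> longest_induced_cycle V E"
    by (rule length_induced_cycle_le_longest[OF fin])
  then show ?thesis
    by simp
qed

end
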